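(* Let $k\ge2$ and let $p_1,\dots,p_k$ be distinct primes, $n=p_1\cdots p_k$. Then $$\Phi_{n}(x)=f(x)\cdot\prod_{j=1}^{k-2}P_j(x),$$ where $$f(x)=(1-x^{n})\cdot\frac{\prod_{i=2}^k\big(1-x^{p_2\cdots p_k/p_i}\big)}{\prod_{i=1}^k\big(1-x^{n/p_i}\big)}\qquad\text{and}\qquad P_j(x)=\prod_{i=j+2}^k\Phi_{p_1\cdots p_j}\big(x^{p_{j+2}\cdots p_k/p_i}\big).$$
   Context: $\Phi_m$ denotes the $m$-th cyclotomic polynomial. In the exponents, $p_2\cdots p_k/p_i$ means the product $p_2p_3\cdots p_k$ divided by $p_i$, and $p_{j+2}\cdots p_k/p_i$ means the product $p_{j+2}\cdots p_k$ divided by $p_i$. Empty products equal $1$. *)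

theory Defs
  imports Complex_Main "HOL-Computational_Algebra.Computational_Algebra"
begin

definition cyclotomic :: "nat \<Rightarrow> complex poly" where
  "cyclotomic m = (\<Prod>k\<in>{k\<in>{1..m}. coprime k m}. [:- cis (2 * pi * real k / real m), 1:])"

abbreviation X_pow :: "nat \<Rightarrow> complex poly" where
  "X_pow e \<equiv> monom 1 e"

end

theory Submission
  imports Defs
begin

(*
  Notation: Phi_m is the m-th cyclotomic polynomial, p_1, ..., p_k are distinct primes,
  m_j = p_1 ... p_j and N_j = p_(j+1) ... p_k, so that n = m_k = N_0.

  The only arithmetic input is the classical relation
      Phi_(m p)(x) Phi_m(x) = Phi_m(x^p)       (p prime, p not dividing m).
  It is proved from the definition of Phi_m as a product over primitive roots of unity:
  after factoring each x^p - zeta into linear factors, the roots of Phi_m(x^p) are the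
  (m p)-th roots of unity zeta^b with b coprime to m; these split into those with b coprime
  to m p (the roots of Phi_(m p)) and those with p dividing b (the roots of Phi_m).
  Substituting x^e for x gives Phi_(m p)(x^e) Phi_m(x^e) = Phi_m(x^(p e)).

  The theorem then follows by telescoping.  With
      T_j = prod_(i>j) Phi_(m_j)(x^(N_j/p_i)),   U_j = Phi_(m_j)(x^(N_j)),
      P_j = prod_(i>j+1) Phi_(m_j)(x^(N_(j+1)/p_i))
  the relation gives T_j U_(j+1) = T_(j+1) U_j P_j, hence by descending induction
  T_j Phi_n = U_j P_j ... P_(k-1) for all j <= k.  At j = 0, where Phi_1 = x - 1, the
  polynomials T_0, U_0, P_0 are products of binomials x^e - 1, and the identity is the
  theorem with the denominator of f cleared (P_(k-1) = 1 is an empty product).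
*)


section \<open>Factoring \<open>X^N - c\<close> over its roots\<close>

lemma monom_minus_const_eq_prod_roots:
  fixes w :: "nat \<Rightarrow> 'a::idom"
  assumes "N > 0" and inj: "inj_on w {..<N}" and roots: "\<And>t. t < N \<Longrightarrow> w t ^ N = c"
  shows "monom 1 N - [:c:] = (\<Prod>t<N. [:- w t, 1:])"
proof (rule ccontr)
  define R where "R = (\<Prod>t<N. [:- w t, 1:])"
  define D where "D = monom 1 N - [:c:] - R"
  assume "monom 1 N - [:c:] \<noteq> (\<Prod>t<N. [:- w t, 1:])"
  then have D_nz: "D \<noteq> 0" by (simp add: D_def R_def)
  have deg_R: "degree R = N"
    unfolding R_def by (subst degree_prod_eq_sum_degree) auto
  have lc_R: "lead_coeff R = 1"
    unfolding R_def by (simp add: lead_coeff_prod)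
  have "degree D \<le> N"
    unfolding D_def using deg_R \<open>N > 0\<close> by (intro degree_diff_le) (auto simp: degree_monom_eq)
  moreover have "coeff D N = 0"
  proof -
    have "coeff R N = 1" using deg_R lc_R by simp
    then show ?thesis using \<open>N > 0\<close> by (cases N) (simp_all add: D_def coeff_monom)
  qed
  ultimately have deg_D: "degree D < N"
    using D_nz by (metis le_neq_implies_less leading_coeff_0_iff)
  have "w ` {..<N} \<subseteq> {x. poly D x = 0}"
  proof
    fix x assume "x \<in> w ` {..<N}"
    then obtain t where t: "t < N" "x = w t" by auto
    then have "poly R x = 0"
      unfolding R_def by (auto simp: poly_prod intro!: prod_zero bexI[of _ t])
    then show "x \<in> {x. poly D x = 0}" using roots[OF t(1)] t by (simp add: D_def poly_monom)
  qed
  then have "card (w ` {..<N}) \<le> card {x. poly D x = 0}"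
    by (intro card_mono poly_roots_finite D_nz)
  also have "\<dots> \<le> degree D" by (rule card_poly_roots_bound[OF D_nz])
  finally show False using deg_D card_image[OF inj] by simp
qed


section \<open>Roots of unity\<close>

definition unity_root :: "nat \<Rightarrow> complex" where
  "unity_root N = cis (2 * pi / real N)"

lemma unity_root_power: "unity_root N ^ b = cis (2 * pi * real b / real N)"
  by (simp add: unity_root_def DeMoivre field_simps)

lemma unity_root_power_self: "unity_root N ^ N = 1"
  by (cases "N = 0") (simp_all add: unity_root_power)

lemma unity_root_power_mod: "unity_root N ^ b = unity_root N ^ (b mod N)"
proof -
  have "unity_root N ^ b = unity_root N ^ (b mod N) * (unity_root N ^ N) ^ (b div N)"
    by (metis mod_mult_div_eq power_add power_mult)
  then show ?thesis by (simp add: unity_root_power_self)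
qed

lemma unity_root_power_inj:
  assumes "N > 0"
  shows "inj_on (\<lambda>b. unity_root N ^ b) {1..N}"
proof (rule inj_onI)
  fix x y assume x: "x \<in> {1..N}" and y: "y \<in> {1..N}"
    and eq: "unity_root N ^ x = unity_root N ^ y"
  have "cis (2 * pi * real (x mod N) / real N) = unity_root N ^ (x mod N)"
    by (simp only: unity_root_power)
  also have "\<dots> = unity_root N ^ y"
    by (simp only: unity_root_power_mod[of N x, symmetric] eq)
  also have "\<dots> = unity_root N ^ (y mod N)" by (rule unity_root_power_mod)
  also have "\<dots> = cis (2 * pi * real (y mod N) / real N)" by (simp only: unity_root_power)
  finally have "cis (2 * pi * real (x mod N) / real N) = cis (2 * pi * real (y mod N) / real N)" .
  then have "x mod N = y mod N"
    using bij_betw_roots_unity[OF assms] assms unfolding bij_betw_def inj_on_def by auto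
  with x y show "x = y" by (cases "x = N"; cases "y = N") auto
qed

lemma unity_root_power_cancel:
  assumes "p > 0"
  shows "unity_root (m * p) ^ (p * a) = unity_root m ^ a"
  using assms by (simp add: unity_root_power field_simps)

lemma cyclotomic_unity_root:
  "cyclotomic m = (\<Prod>a\<in>{a\<in>{1..m}. coprime a m}. [:- (unity_root m ^ a), 1:])"
  unfolding cyclotomic_def by (simp add: unity_root_power)

lemma cyclotomic_one: "cyclotomic 1 = [:-1, 1:]"
proof -
  have "{a\<in>{1..1::nat}. coprime a 1} = {1}" by auto
  then show ?thesis by (simp add: cyclotomic_def)
qed

lemma cyclotomic_nonzero: "cyclotomic m \<noteq> 0"
  by (simp add: cyclotomic_def)


section \<open>Residues coprime to \<open>m\<close> modulo \<open>m p\<close>\<close>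

lemma coprime_add_mult_self: "coprime (a + m * t) m = coprime a (m::nat)"
  by (metis add.commute coprime_iff_gcd_eq_1 gcd.commute gcd_add_mult mult.commute)

lemma coprime_residues_lift_bij:
  fixes m p :: nat
  assumes "m > 0"
  shows "bij_betw (\<lambda>(a, t). a + m * t) ({a\<in>{1..m}. coprime a m} \<times> {..<p})
                                          {b\<in>{1..m * p}. coprime b m}"
proof (rule bij_betw_byWitness[where f' = "\<lambda>b. ((b - 1) mod m + 1, (b - 1) div m)"])
  have "((a + m * t - 1) mod m + 1, (a + m * t - 1) div m) = (a, t)" if a: "a \<in> {1..m}" for a t
  proof -
    obtain a' where "a = Suc a'" "a' < m" using a by (cases a) auto
    then show ?thesis by simp
  qed
  then show "\<forall>x\<in>{a\<in>{1..m}. coprime a m} \<times> {..<p}.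
          (\<lambda>b. ((b - 1) mod m + 1, (b - 1) div m)) ((\<lambda>(a, t). a + m * t) x) = x"
    by auto
  show "\<forall>b\<in>{b\<in>{1..m * p}. coprime b m}.
          (\<lambda>(a, t). a + m * t) ((\<lambda>b. ((b - 1) mod m + 1, (b - 1) div m)) b) = b"
    by auto
  have "a + m * t \<in> {b\<in>{1..m * p}. coprime b m}"
    if "a \<in> {1..m}" "coprime a m" "t < p" for a t
  proof -
    from \<open>t < p\<close> have "m * Suc t \<le> m * p" by (intro mult_le_mono2) simp
    with that show ?thesis by (simp add: coprime_add_mult_self)
  qed
  then show "(\<lambda>(a, t). a + m * t) ` ({a\<in>{1..m}. coprime a m} \<times> {..<p})
          \<subseteq> {b\<in>{1..m * p}. coprime b m}"
    by auto
  have "((b - 1) mod m + 1, (b - 1) div m) \<in> {a\<in>{1..m}. coprime a m} \<times> {..<p}"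
    if b: "b \<in> {1..m * p}" "coprime b m" for b
  proof -
    have "b = ((b - 1) mod m + 1) + m * ((b - 1) div m)" using b by simp
    then have "coprime ((b - 1) mod m + 1) m" using b coprime_add_mult_self by metis
    moreover have "(b - 1) div m < p"
      using b assms by (auto simp: div_less_iff_less_mult mult.commute)
    ultimately show ?thesis using assms by (simp add: Suc_leI)
  qed
  then show "(\<lambda>b. ((b - 1) mod m + 1, (b - 1) div m)) ` {b\<in>{1..m * p}. coprime b m}
          \<subseteq> {a\<in>{1..m}. coprime a m} \<times> {..<p}"
    by blast
qed

lemma coprime_residues_split:
  fixes m p :: nat
  assumes "prime p" and "\<not> p dvd m"
  shows "{b\<in>{1..m * p}. coprime b m}
           = {b\<in>{1..m * p}. coprime b (m * p)} \<union> (\<lambda>c. p * c) ` {a\<in>{1..m}. coprime a m}"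
proof (intro set_eqI iffI)
  fix b assume b: "b \<in> {b\<in>{1..m * p}. coprime b m}"
  show "b \<in> {b\<in>{1..m * p}. coprime b (m * p)} \<union> (\<lambda>c. p * c) ` {a\<in>{1..m}. coprime a m}"
  proof (cases "p dvd b")
    case True
    then obtain c where c: "b = p * c" by blast
    have "c \<ge> 1" using b c by (cases c) auto
    moreover have "c \<le> m" using b c prime_gt_0_nat[OF assms(1)] by (simp add: mult.commute)
    moreover have "coprime c m" using b c by simp
    ultimately have "c \<in> {a\<in>{1..m}. coprime a m}" by simp
    then show ?thesis using c by blast
  next
    case False
    then have "coprime b p" using assms(1) prime_imp_coprime coprime_commute by blast
    then show ?thesis using b by simp
  qed
next
  fix b assume "b \<in> {b\<in>{1..m * p}. coprime b (m * p)} \<union> (\<lambda>c. p * c) ` {a\<in>{1..m}. coprime a m}"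
  moreover have "coprime p m" using assms prime_imp_coprime by blast
  ultimately show "b \<in> {b\<in>{1..m * p}. coprime b m}"
    using prime_gt_0_nat[OF assms(1)] by (auto simp: mult.commute)
qed

lemma coprime_residues_multiples_disjoint:
  fixes m p :: nat
  assumes "prime p"
  shows "{b\<in>{1..m * p}. coprime b (m * p)} \<inter> (\<lambda>c. p * c) ` A = {}"
  using assms by auto


section \<open>The relation \<open>\<Phi>\<^sub>m\<^sub>p(x) \<Phi>\<^sub>m(x) = \<Phi>\<^sub>m(x\<^sup>p)\<close>\<close>

lemma X_pow_minus_unity_root_factor:
  assumes "m > 0" "p > 0" "a \<in> {1..m}"
  shows "X_pow p - [:unity_root m ^ a:] = (\<Prod>t<p. [:- (unity_root (m * p) ^ (a + m * t)), 1:])"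
proof (rule monom_minus_const_eq_prod_roots[OF \<open>p > 0\<close>])
  have "(\<lambda>t. a + m * t) ` {..<p} \<subseteq> {1..m * p}"
  proof clarify
    fix t assume "t < p"
    then have "m * Suc t \<le> m * p" by (intro mult_le_mono2) simp
    then show "a + m * t \<in> {1..m * p}" using assms(3) by simp
  qed
  then have "inj_on (\<lambda>b. unity_root (m * p) ^ b) ((\<lambda>t. a + m * t) ` {..<p})"
    using unity_root_power_inj assms by (meson inj_on_subset nat_0_less_mult_iff)
  moreover have "inj_on (\<lambda>t. a + m * t) {..<p}" using assms(1) by (simp add: inj_on_def)
  ultimately show "inj_on (\<lambda>t. unity_root (m * p) ^ (a + m * t)) {..<p}"
    using comp_inj_on by (fastforce simp: comp_def)
next
  fix t
  have "(unity_root (m * p) ^ (a + m * t)) ^ p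
          = unity_root (m * p) ^ (p * a) * (unity_root (m * p) ^ (m * p)) ^ t"
    by (simp add: power_mult[symmetric] power_add[symmetric] algebra_simps)
  then show "(unity_root (m * p) ^ (a + m * t)) ^ p = unity_root m ^ a"
    by (simp add: unity_root_power_self unity_root_power_cancel[OF \<open>p > 0\<close>])
qed

lemma cyclotomic_pcompose_X_pow:
  assumes "m > 0" "p > 0"
  shows "pcompose (cyclotomic m) (X_pow p)
           = (\<Prod>b\<in>{b\<in>{1..m * p}. coprime b m}. [:- (unity_root (m * p) ^ b), 1:])"
proof -
  define A where "A = {a\<in>{1..m}. coprime a m}"
  define g where "g b = [:- (unity_root (m * p) ^ b), 1:]" for b
  have "pcompose (cyclotomic m) (X_pow p) = (\<Prod>a\<in>A. X_pow p - [:unity_root m ^ a:])"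
    unfolding cyclotomic_unity_root A_def pcompose_prod
    by (intro prod.cong refl) (simp add: pcompose_pCons)
  also have "\<dots> = (\<Prod>a\<in>A. \<Prod>t<p. g (a + m * t))"
    using X_pow_minus_unity_root_factor[OF assms] by (simp add: A_def g_def)
  also have "\<dots> = (\<Prod>(a, t)\<in>A \<times> {..<p}. g (a + m * t))"
    by (rule prod.cartesian_product)
  also have "\<dots> = (\<Prod>b\<in>{b\<in>{1..m * p}. coprime b m}. g b)"
    using prod.reindex_bij_betw[OF coprime_residues_lift_bij[OF \<open>m > 0\<close>, of p], of g]
    by (simp add: A_def case_prod_beta)
  finally show ?thesis by (simp add: g_def)
qed

theorem cyclotomic_mult_prime:
  assumes "m > 0" "prime p" "\<not> p dvd m"
  shows "cyclotomic (m * p) * cyclotomic m = pcompose (cyclotomic m) (X_pow p)"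
proof -
  define g where "g b = [:- (unity_root (m * p) ^ b), 1:]" for b
  have p_pos: "p > 0" using assms(2) prime_gt_0_nat by blast
  have "prod g ((\<lambda>c. p * c) ` {a\<in>{1..m}. coprime a m}) = (\<Prod>a\<in>{a\<in>{1..m}. coprime a m}. g (p * a))"
    using p_pos by (subst prod.reindex) (auto simp: inj_on_def)
  also have "\<dots> = cyclotomic m"
    by (simp add: g_def cyclotomic_unity_root unity_root_power_cancel[OF p_pos])
  finally have multiples: "prod g ((\<lambda>c. p * c) ` {a\<in>{1..m}. coprime a m}) = cyclotomic m" .
  have "pcompose (cyclotomic m) (X_pow p) = prod g {b\<in>{1..m * p}. coprime b m}"
    using cyclotomic_pcompose_X_pow[OF assms(1) p_pos] by (simp add: g_def)
  also have "\<dots> = prod g {b\<in>{1..m * p}. coprime b (m * p)}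
                  * prod g ((\<lambda>c. p * c) ` {a\<in>{1..m}. coprime a m})"
    unfolding coprime_residues_split[OF assms(2,3)]
    by (intro prod.union_disjoint coprime_residues_multiples_disjoint[OF assms(2)]) auto
  also have "prod g {b\<in>{1..m * p}. coprime b (m * p)} = cyclotomic (m * p)"
    by (simp add: g_def cyclotomic_unity_root)
  finally show ?thesis using multiples by simp
qed


definition cyclotomic_at_power :: "nat \<Rightarrow> nat \<Rightarrow> complex poly" where
  "cyclotomic_at_power m e = pcompose (cyclotomic m) (X_pow e)"

lemma pcompose_monom_monom:
  "pcompose (monom (1::'a::comm_semiring_1) a) (monom 1 b) = monom 1 (a * b)"
proof -
  have "pcompose ([:0, 1::'a:] ^ a) q = q ^ a" for q
    by (induction a) (simp_all add: pcompose_1 pcompose_mult pcompose_pCons)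
  then show ?thesis by (simp add: monom_altdef[of 1 a] monom_power mult.commute)
qed

lemma cyclotomic_at_power_mult_prime:
  assumes "m > 0" "prime p" "\<not> p dvd m"
  shows "cyclotomic_at_power (m * p) e * cyclotomic_at_power m e = cyclotomic_at_power m (p * e)"
  using arg_cong[OF cyclotomic_mult_prime[OF assms], of "\<lambda>q. pcompose q (X_pow e)"]
  by (simp add: pcompose_mult cyclotomic_at_power_def pcompose_assoc[symmetric]
      pcompose_monom_monom)

lemma cyclotomic_at_power_one: "cyclotomic_at_power 1 e = X_pow e - 1"
  unfolding cyclotomic_at_power_def cyclotomic_one by (simp add: pcompose_pCons one_pCons)

lemma cyclotomic_at_power_nonzero: "e > 0 \<Longrightarrow> cyclotomic_at_power m e \<noteq> 0"
  unfolding cyclotomic_at_power_def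
  using pcompose_eq_0[of "cyclotomic m" "X_pow e"] cyclotomic_nonzero
  by (auto simp: degree_monom_eq)


section \<open>Telescoping\<close>

definition prefix_prod :: "(nat \<Rightarrow> nat) \<Rightarrow> nat \<Rightarrow> nat" where
  "prefix_prod p j = (\<Prod>l=1..j. p l)"

definition suffix_prod :: "(nat \<Rightarrow> nat) \<Rightarrow> nat \<Rightarrow> nat \<Rightarrow> nat" where
  "suffix_prod p k j = (\<Prod>l=Suc j..k. p l)"

definition T_poly :: "(nat \<Rightarrow> nat) \<Rightarrow> nat \<Rightarrow> nat \<Rightarrow> complex poly" where
  "T_poly p k j = (\<Prod>i=Suc j..k. cyclotomic_at_power (prefix_prod p j) (suffix_prod p k j div p i))"

definition U_poly :: "(nat \<Rightarrow> nat) \<Rightarrow> nat \<Rightarrow> nat \<Rightarrow> complex poly" where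
  "U_poly p k j = cyclotomic_at_power (prefix_prod p j) (suffix_prod p k j)"

definition P_poly :: "(nat \<Rightarrow> nat) \<Rightarrow> nat \<Rightarrow> nat \<Rightarrow> complex poly" where
  "P_poly p k j =
     (\<Prod>i=j+2..k. cyclotomic_at_power (prefix_prod p j) (suffix_prod p k (Suc j) div p i))"

lemma prod_minus_one_flip:
  fixes f :: "'b \<Rightarrow> 'a::comm_ring_1"
  shows "(\<Prod>i\<in>I. f i - 1) = (-1) ^ card I * (\<Prod>i\<in>I. 1 - f i)"
proof -
  have "(\<Prod>i\<in>I. f i - 1) = (\<Prod>i\<in>I. (-1) * (1 - f i))" by simp
  then show ?thesis by (simp only: prod.distrib prod_constant)
qed

lemma one_minus_X_pow_nonzero: "e > 0 \<Longrightarrow> 1 - X_pow e \<noteq> 0"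
proof
  assume "e > 0" "1 - X_pow e = 0"
  then have "coeff (1 - X_pow e) 0 = 0" by simp
  then show False using \<open>e > 0\<close> by (simp add: coeff_monom)
qed

locale distinct_primes =
  fixes p :: "nat \<Rightarrow> nat" and k :: nat
  assumes prime: "\<forall>i\<in>{1..k}. prime (p i)" and inj: "inj_on p {1..k}"
begin

lemma prefix_prod_pos: "j \<le> k \<Longrightarrow> prefix_prod p j > 0"
  unfolding prefix_prod_def using prime by (intro prod_pos) (auto intro: prime_gt_0_nat)

lemma suffix_prod_pos: "suffix_prod p k j > 0"
  unfolding suffix_prod_def using prime by (intro prod_pos) (auto intro: prime_gt_0_nat)

lemma suffix_prod_Suc: "j < k \<Longrightarrow> suffix_prod p k j = p (Suc j) * suffix_prod p k (Suc j)"
  unfolding suffix_prod_def by (subst prod.atLeast_Suc_atMost) auto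

lemma dvd_suffix_prod: "Suc j \<le> i \<Longrightarrow> i \<le> k \<Longrightarrow> p i dvd suffix_prod p k j"
  unfolding suffix_prod_def by (intro dvd_prodI) auto

lemma not_dvd_prefix_prod:
  assumes "j < k"
  shows "\<not> p (Suc j) dvd prefix_prod p j"
proof
  assume "p (Suc j) dvd prefix_prod p j"
  moreover have prime_next: "prime (p (Suc j))" using prime assms by simp
  ultimately obtain l where l: "l \<in> {1..j}" "p (Suc j) dvd p l"
    by (auto simp: prefix_prod_def prime_dvd_prod_iff)
  then have "p (Suc j) = p l"
    using prime assms by (intro primes_dvd_imp_eq[OF prime_next]) auto
  then have "Suc j = l" using inj_onD[OF inj] l assms by auto
  then show False using l by simp
qed

text \<open>With \<open>m = m\<^sub>j\<close>, \<open>q = p\<^sub>j\<^sub>+\<^sub>1\<close>,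
  \<open>N = N\<^sub>j\<^sub>+\<^sub>1\<close> and \<open>X = \<prod>\<^sub>i\<^sub>>\<^sub>j\<^sub>+\<^sub>1 \<Phi>\<^sub>m(x\<^sup>q\<^sup>N\<^sup>/\<^sup>p\<^sup>i)\<close>, the relation
  \<open>\<Phi>\<^sub>m\<^sub>q(x\<^sup>e) \<Phi>\<^sub>m(x\<^sup>e) = \<Phi>\<^sub>m(x\<^sup>q\<^sup>e)\<close> gives \<open>T\<^sub>j = \<Phi>\<^sub>m(x\<^sup>N) X\<close>, \<open>T\<^sub>j\<^sub>+\<^sub>1 P\<^sub>j = X\<close> and
  \<open>U\<^sub>j = U\<^sub>j\<^sub>+\<^sub>1 \<Phi>\<^sub>m(x\<^sup>N)\<close>.\<close>

lemma telescope_step: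
  assumes j: "j < k"
  shows "T_poly p k j * U_poly p k (Suc j) = T_poly p k (Suc j) * U_poly p k j * P_poly p k j"
proof -
  define q where "q = p (Suc j)"
  define m where "m = prefix_prod p j"
  define N where "N = suffix_prod p k (Suc j)"
  define I where "I = {Suc (Suc j)..k}"
  have q_prime: "prime q" using prime j by (simp add: q_def)
  have rel: "cyclotomic_at_power (m * q) e * cyclotomic_at_power m e = cyclotomic_at_power m (q * e)"
    for e
    using cyclotomic_at_power_mult_prime prefix_prod_pos not_dvd_prefix_prod j q_prime
    by (simp add: m_def q_def)
  have suffix_j: "suffix_prod p k j = q * N" using suffix_prod_Suc[OF j] by (simp add: q_def N_def)
  have prefix_Suc: "prefix_prod p (Suc j) = m * q" by (simp add: prefix_prod_def m_def q_def)
  define X where "X = (\<Prod>i\<in>I. cyclotomic_at_power m (q * N div p i))"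
  have T_j: "T_poly p k j = cyclotomic_at_power m N * X"
    unfolding T_poly_def X_def I_def m_def suffix_j using j q_prime
    by (subst prod.atLeast_Suc_atMost) (auto simp: q_def prime_gt_0_nat)
  have "T_poly p k (Suc j) * P_poly p k j
          = (\<Prod>i\<in>I. cyclotomic_at_power (m * q) (N div p i) * cyclotomic_at_power m (N div p i))"
    unfolding T_poly_def P_poly_def I_def prefix_Suc N_def m_def by (simp add: prod.distrib)
  also have "\<dots> = (\<Prod>i\<in>I. cyclotomic_at_power m (q * (N div p i)))" by (simp only: rel)
  also have "\<dots> = X"
    unfolding X_def I_def N_def by (intro prod.cong refl) (simp add: div_mult_swap dvd_suffix_prod)
  finally have T_Suc: "T_poly p k (Suc j) * P_poly p k j = X" .
  have U_j: "U_poly p k j = U_poly p k (Suc j) * cyclotomic_at_power m N"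
    unfolding U_poly_def prefix_Suc suffix_j N_def[symmetric] m_def[symmetric] by (rule rel[symmetric])
  show ?thesis unfolding T_j U_j T_Suc[symmetric] by (simp only: ac_simps)
qed

lemma telescope:
  assumes "j \<le> k"
  shows "T_poly p k j * cyclotomic (prefix_prod p k)
           = U_poly p k j * (\<Prod>l\<in>{j..<k}. P_poly p k l)"
  using assms
proof (induction j rule: inc_induct)
  case base
  show ?case
    by (simp add: T_poly_def U_poly_def suffix_prod_def cyclotomic_at_power_def monom_altdef)
next
  case (step j)
  have "U_poly p k (Suc j) \<noteq> 0"
    unfolding U_poly_def by (rule cyclotomic_at_power_nonzero[OF suffix_prod_pos])
  moreover have "(T_poly p k j * cyclotomic (prefix_prod p k)) * U_poly p k (Suc j)
      = (U_poly p k j * (\<Prod>l\<in>{j..<k}. P_poly p k l)) * U_poly p k (Suc j)"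
  proof -
    have "(T_poly p k j * cyclotomic (prefix_prod p k)) * U_poly p k (Suc j)
        = U_poly p k j * P_poly p k j * (T_poly p k (Suc j) * cyclotomic (prefix_prod p k))"
      using telescope_step[OF step.hyps(2)] by (simp add: ac_simps)
    also have "\<dots> = U_poly p k j * P_poly p k j * (U_poly p k (Suc j) * (\<Prod>l\<in>{Suc j..<k}. P_poly p k l))"
      by (simp only: step.IH)
    also have "\<dots> = U_poly p k j * (P_poly p k j * (\<Prod>l\<in>{Suc j..<k}. P_poly p k l))
                      * U_poly p k (Suc j)"
      by (simp only: ac_simps)
    also have "P_poly p k j * (\<Prod>l\<in>{Suc j..<k}. P_poly p k l) = (\<Prod>l\<in>{j..<k}. P_poly p k l)"
      using step.hyps(2) by (simp add: prod.atLeast_Suc_lessThan)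
    finally show ?thesis .
  qed
  ultimately show ?case by simp
qed

text \<open>Since \<open>\<Phi>\<^sub>1(x\<^sup>e) = x\<^sup>e - 1\<close>, the
  polynomials \<open>T\<^sub>0\<close>, \<open>U\<^sub>0\<close>, \<open>P\<^sub>0\<close> are products of binomials, and up to the common sign
  \<open>(-1)\<^sup>k\<close> this is the theorem with its denominator cleared (\<open>n = m\<^sub>k\<close>).\<close>

lemma telescope_at_zero:
  assumes "k \<ge> 1"
  shows "cyclotomic (prefix_prod p k) * (\<Prod>i=1..k. 1 - X_pow (prefix_prod p k div p i))
           = (1 - X_pow (prefix_prod p k)) * (\<Prod>i=2..k. 1 - X_pow (suffix_prod p k 1 div p i))
             * (\<Prod>l\<in>{1..<k}. P_poly p k l)"
    (is "cyclotomic ?n * ?D = (1 - X_pow ?n) * ?E * ?P")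
proof -
  have prefix_0: "prefix_prod p 0 = 1" and suffix_0: "suffix_prod p k 0 = ?n"
    by (simp_all add: prefix_prod_def suffix_prod_def)
  have T_0: "T_poly p k 0 = (-1) ^ k * ?D"
    unfolding T_poly_def prefix_0 suffix_0 cyclotomic_at_power_one by (simp add: prod_minus_one_flip)
  have U_0: "U_poly p k 0 = (-1) * (1 - X_pow ?n)"
    unfolding U_poly_def prefix_0 suffix_0 cyclotomic_at_power_one by simp
  have P_0: "P_poly p k 0 = (-1) ^ (k - 1) * ?E"
    unfolding P_poly_def prefix_0 cyclotomic_at_power_one
    by (simp add: prod_minus_one_flip numeral_2_eq_2 One_nat_def)
  have sign: "(-1) * (-1) ^ (k - 1) = ((-1) ^ k :: complex poly)"
    using assms by (cases k) simp_all
  have "(-1) ^ k * (cyclotomic ?n * ?D) = T_poly p k 0 * cyclotomic ?n"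
    by (simp add: T_0)
  also have "\<dots> = U_poly p k 0 * (\<Prod>l\<in>{0..<k}. P_poly p k l)"
    by (rule telescope) simp
  also have "\<dots> = U_poly p k 0 * P_poly p k 0 * ?P"
    using assms by (simp add: prod.atLeast_Suc_lessThan mult.assoc)
  also have "\<dots> = (-1) ^ k * ((1 - X_pow ?n) * ?E * ?P)"
    unfolding U_0 P_0 sign[symmetric] by (simp only: mult_ac)
  finally show ?thesis by simp
qed

lemma binomials_nonzero: "(\<Prod>i=1..k. 1 - X_pow (prefix_prod p k div p i)) \<noteq> 0"
proof -
  have "1 - X_pow (prefix_prod p k div p i) \<noteq> 0" if i: "i \<in> {1..k}" for i
  proof -
    have "p i dvd prefix_prod p k" unfolding prefix_prod_def using i by (intro dvd_prodI) auto
    moreover have "prefix_prod p k > 0" by (rule prefix_prod_pos) simp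
    moreover have "p i > 0" using prime i prime_gt_0_nat by blast
    ultimately have "prefix_prod p k div p i > 0" by (simp add: div_greater_zero_iff dvd_imp_le)
    then show ?thesis by (rule one_minus_X_pow_nonzero)
  qed
  then show ?thesis by (subst prod_zero_iff) auto
qed

end


text \<open>\<open>P\<^sub>k\<^sub>-\<^sub>1\<close> is an empty product, so the product of the \<open>P\<^sub>j\<close> stops at \<open>k - 2\<close>.\<close>

lemma prod_P_poly_drop_last:
  assumes "k \<ge> 2"
  shows "(\<Prod>l\<in>{1..<k}. P_poly p k l) = (\<Prod>j=1..k-2. P_poly p k j)"
proof -
  have "{1..<k} = insert (k - 1) {1..k-2}" and "k - 1 \<notin> {1..k-2}"
    using assms by auto
  moreover have "P_poly p k (k - 1) = 1" using assms by (simp add: P_poly_def)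
  ultimately show ?thesis by simp
qed

lemma P_poly_unfold:
  "P_poly p k j = (\<Prod>i=j+2..k. pcompose (cyclotomic (\<Prod>l=1..j. p l))
                                          (X_pow ((\<Prod>l=j+2..k. p l) div p i)))"
  by (simp add: P_poly_def cyclotomic_at_power_def prefix_prod_def suffix_prod_def)

lemma divide_out_denominator:
  fixes a b c d e :: "'a::field"
  assumes "a * d = b * e * c" and "d \<noteq> 0"
  shows "a = b * e / d * c"
  using assms by (simp add: field_simps)

theorem lemma1:
  fixes k :: nat and p :: "nat \<Rightarrow> nat"
  assumes "k \<ge> 2"
    and "\<forall>i\<in>{1..k}. prime (p i)"
    and "inj_on p {1..k}"
  shows "(let n = (\<Prod>i=1..k. p i);
              f = to_fract (1 - X_pow n)
                  * to_fract (\<Prod>i=2..k. 1 - X_pow ((\<Prod>l=2..k. p l) div p i))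
                  / to_fract (\<Prod>i=1..k. 1 - X_pow (n div p i));
              P = (\<lambda>j. \<Prod>i=j+2..k. pcompose (cyclotomic (\<Prod>l=1..j. p l))
                                             (X_pow ((\<Prod>l=j+2..k. p l) div p i)))
          in to_fract (cyclotomic n) = f * to_fract (\<Prod>j=1..k-2. P j))"
proof -
  interpret distinct_primes p k using assms(2,3) by unfold_locales
  have n: "prefix_prod p k = (\<Prod>i=1..k. p i)" and Q: "suffix_prod p k 1 = (\<Prod>l=2..k. p l)"
    by (simp_all add: prefix_prod_def suffix_prod_def numeral_2_eq_2)
  have "to_fract (cyclotomic (prefix_prod p k))
          = to_fract (1 - X_pow (prefix_prod p k))
            * to_fract (\<Prod>i=2..k. 1 - X_pow (suffix_prod p k 1 div p i))
            / to_fract (\<Prod>i=1..k. 1 - X_pow (prefix_prod p k div p i))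
            * to_fract (\<Prod>j=1..k-2. P_poly p k j)"
    using arg_cong[OF telescope_at_zero, of to_fract] assms(1) binomials_nonzero
    by (intro divide_out_denominator)
      (simp_all only: prod_P_poly_drop_last to_fract_mult to_fract_eq_0_iff simp_thms)
  then show ?thesis by (simp only: Let_def n Q P_poly_unfold)
qed

end
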